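(* Let $G$ be a group with generating set $Y$. Let $S=\{x_0,\dots,x_m\}$ and $T=\{y_0,\dots,y_n\}$ be subsets of $Y$ with $x_0=y_0$. Assume (i) $[x_i,y_j]=1$ for $1\le i\le m$ and $1\le j\le n$, and (ii) $\langle y_0,y_1,\dots,y_n\rangle=\langle y_0y_1\cdots y_n\rangle\times\langle y_1,\dots,y_n\rangle$ (internal direct product). Then $[x_i,\langle y_0,\dots,y_n\rangle^2]=1$ for $1\le i\le m$, and $[y_j,\langle x_0,\dots,x_m\rangle^2]=1$ for $1\le j\le n$.
   Context: Conventions: $[x,y]=x^{-1}y^{-1}xy$; for a subgroup $H$, $H^2=[H,H]$ is its commutator subgroup; $[a,H]=1$ means $a$ commutes with every element of $H$. *)

theory Defs
  imports "HOL-Algebra.Algebra"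
begin

definition list_prod :: "('a, 'b) monoid_scheme \<Rightarrow> 'a list \<Rightarrow> 'a" where
  "list_prod G as = foldr (\<lambda>a b. a \<otimes>\<^bsub>G\<^esub> b) as \<one>\<^bsub>G\<^esub>"

definition internal_direct_product ::
  "('a, 'b) monoid_scheme \<Rightarrow> 'a set \<Rightarrow> 'a set \<Rightarrow> 'a set \<Rightarrow> bool" where
  "internal_direct_product G C A B \<longleftrightarrow>
     subgroup C G \<and>
     A \<lhd> (G\<lparr>carrier := C\<rparr>) \<and> B \<lhd> (G\<lparr>carrier := C\<rparr>) \<and>
     A \<inter> B = {\<one>\<^bsub>G\<^esub>} \<and> A <#>\<^bsub>G\<^esub> B = C"

end

theory Submission
  imports Defs
begin

(*
  Put B = <y_1,...,y_n> and z = y_0 y_1 ... y_n.  If c centralises a subgroup N, then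
  N<c> is a subgroup and [g c^k, h c^l] = [g, h], so the derived subgroup of anything
  inside N<c> lies in N.  The direct product hypothesis makes z centralise B and gives
  <y_0,...,y_n> = B<z>; hence its derived subgroup lies in B, which every x_i (i >= 1)
  centralises.  Dually, with p = y_1 ... y_n in B we get x_0 = y_0 = z p^-1, where z and
  x_1,...,x_m lie in the centraliser C of B and p centralises C; so <x_0,...,x_m> lies in
  C<p>, and its derived subgroup lies in C, i.e. commutes with every y_j.
*)

definition centralizer :: "('a, 'b) monoid_scheme \<Rightarrow> 'a set \<Rightarrow> 'a set" where
  "centralizer G S = {g \<in> carrier G. \<forall>s\<in>S. g \<otimes>\<^bsub>G\<^esub> s = s \<otimes>\<^bsub>G\<^esub> g}"

lemma list_prod_Cons [simp]: "list_prod G (a # as) = a \<otimes>\<^bsub>G\<^esub> list_prod G as"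
  by (simp add: list_prod_def)

lemma list_prod_closed:
  assumes "subgroup H G" "set as \<subseteq> H"
  shows "list_prod G as \<in> H"
  using assms(2) by (induction as)
    (auto simp: list_prod_def subgroup.one_closed[OF assms(1)] subgroup.m_closed[OF assms(1)])

context group begin

lemma m_inv_cancel_left [simp]:
  assumes "x \<in> carrier G" "y \<in> carrier G"
  shows "x \<otimes> (inv x \<otimes> y) = y"
  using assms by (simp add: m_assoc[symmetric])

lemma inv_m_cancel_left [simp]:
  assumes "x \<in> carrier G" "y \<in> carrier G"
  shows "inv x \<otimes> (x \<otimes> y) = y"
  using assms by (simp add: m_assoc[symmetric])

lemma inv_commute:
  assumes "x \<in> carrier G" "y \<in> carrier G" "x \<otimes> y = y \<otimes> x"
  shows "inv x \<otimes> y = y \<otimes> inv x"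
proof -
  have "y \<otimes> inv x = inv x \<otimes> (x \<otimes> y) \<otimes> inv x"
    using assms(1,2) by (simp add: m_assoc)
  also have "\<dots> = inv x \<otimes> (y \<otimes> x) \<otimes> inv x"
    by (simp only: assms(3))
  also have "\<dots> = inv x \<otimes> y"
    using assms(1,2) by (simp add: m_assoc)
  finally show ?thesis ..
qed

lemma centralizer_sym:
  assumes "S \<subseteq> carrier G" "T \<subseteq> carrier G"
  shows "S \<subseteq> centralizer G T \<longleftrightarrow> T \<subseteq> centralizer G S"
  using assms unfolding centralizer_def by auto

lemma centralizer_Un:
  "centralizer G (A \<union> B) = centralizer G A \<inter> centralizer G B"
  unfolding centralizer_def by blast

lemma subgroup_centralizer:
  assumes "S \<subseteq> carrier G"
  shows "subgroup (centralizer G S) G"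
proof (rule subgroupI)
  show "centralizer G S \<subseteq> carrier G"
    unfolding centralizer_def by blast
  show "centralizer G S \<noteq> {}"
    using assms unfolding centralizer_def by force
next
  fix g assume "g \<in> centralizer G S"
  then show "inv g \<in> centralizer G S"
    using assms inv_commute unfolding centralizer_def by auto
next
  fix g h assume g: "g \<in> centralizer G S" and h: "h \<in> centralizer G S"
  have "g \<otimes> h \<otimes> s = s \<otimes> (g \<otimes> h)" if s: "s \<in> S" for s
  proof -
    have c: "g \<in> carrier G" "h \<in> carrier G" "s \<in> carrier G"
      using g h s assms unfolding centralizer_def by auto
    have "g \<otimes> h \<otimes> s = g \<otimes> (s \<otimes> h)"
      using c h s unfolding centralizer_def by (simp add: m_assoc)
    also have "\<dots> = s \<otimes> (g \<otimes> h)"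
      using c g s unfolding centralizer_def by (simp add: m_assoc[symmetric])
    finally show ?thesis .
  qed
  then show "g \<otimes> h \<in> centralizer G S"
    using g h unfolding centralizer_def by auto
qed

lemma generate_subset_centralizer:
  assumes "S \<subseteq> carrier G" "T \<subseteq> carrier G" "S \<subseteq> centralizer G T"
  shows "generate G S \<subseteq> centralizer G T"
  using generate_subgroup_incl[OF assms(3) subgroup_centralizer[OF assms(2)]] .

lemma generate_singleton_subset_centralizer:
  assumes "H \<subseteq> carrier G" "c \<in> centralizer G H"
  shows "generate G {c} \<subseteq> centralizer G H"
proof -
  have "{c} \<subseteq> carrier G"
    using assms(2) unfolding centralizer_def by blast
  with assms show ?thesis
    by (intro generate_subset_centralizer) auto
qed

lemma generate_singleton_abelian:
  assumes "c \<in> carrier G"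
  shows "generate G {c} \<subseteq> centralizer G (generate G {c})"
proof -
  have gen: "generate G {c} \<subseteq> carrier G"
    using assms by (simp add: generate_incl)
  have "generate G {c} \<subseteq> centralizer G {c}"
    using assms by (intro generate_subset_centralizer) (auto simp: centralizer_def)
  then have "{c} \<subseteq> centralizer G (generate G {c})"
    using centralizer_sym[OF gen, of "{c}"] assms by blast
  then show ?thesis
    using assms gen by (intro generate_subset_centralizer) auto
qed

lemma set_mult_commute_centralizer:
  assumes "A \<subseteq> centralizer G B"
  shows "A <#> B = B <#> A"
proof -
  have "a \<otimes> b = b \<otimes> a" if "a \<in> A" "b \<in> B" for a b
    using assms that unfolding centralizer_def by blast
  then show ?thesis
    unfolding set_mult_def by fastforce
qed

lemma commutator_eq_one_iff:
  assumes "a \<in> carrier G" "b \<in> carrier G"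
  shows "a \<otimes> b \<otimes> inv a \<otimes> inv b = \<one> \<longleftrightarrow> a \<otimes> b = b \<otimes> a"
proof -
  have "a \<otimes> b \<otimes> inv a \<otimes> inv b = (a \<otimes> b) \<otimes> inv (b \<otimes> a)"
    using assms by (simp add: inv_mult_group m_assoc)
  then show ?thesis
    using assms by (simp add: inv_solve_right')
qed

lemma inv_commutator_eq_one_iff:
  assumes "a \<in> carrier G" "b \<in> carrier G"
  shows "inv a \<otimes> inv b \<otimes> a \<otimes> b = \<one> \<longleftrightarrow> a \<otimes> b = b \<otimes> a"
proof -
  have "inv a \<otimes> inv b \<otimes> a \<otimes> b = \<one> \<longleftrightarrow> inv a \<otimes> inv b = inv b \<otimes> inv a"
    using assms commutator_eq_one_iff[of "inv a" "inv b"] by simp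
  also have "\<dots> \<longleftrightarrow> inv (b \<otimes> a) = inv (a \<otimes> b)"
    using assms by (simp add: inv_mult_group)
  also have "\<dots> \<longleftrightarrow> a \<otimes> b = b \<otimes> a"
    using assms by (metis inv_inv m_closed)
  finally show ?thesis .
qed

lemma mem_centralizer_generateI:
  assumes "a \<in> carrier G" "S \<subseteq> carrier G" "\<forall>s\<in>S. inv a \<otimes> inv s \<otimes> a \<otimes> s = \<one>"
  shows "a \<in> centralizer G (generate G S)"
proof -
  have "S \<subseteq> centralizer G {a}"
  proof
    fix s assume s: "s \<in> S"
    then have "a \<otimes> s = s \<otimes> a"
      using assms inv_commutator_eq_one_iff[of a s] by auto
    then show "s \<in> centralizer G {a}"
      using s assms(2) unfolding centralizer_def by auto
  qed
  then have "generate G S \<subseteq> centralizer G {a}"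
    using assms(1,2) by (intro generate_subset_centralizer) auto
  then have "{a} \<subseteq> centralizer G (generate G S)"
    using centralizer_sym[OF generate_incl[OF assms(2)], of "{a}"] assms(1) by blast
  then show ?thesis
    by blast
qed

lemma commutator_mult_left:
  assumes "a \<in> carrier G" "b \<in> carrier G" "c \<in> carrier G" "c \<otimes> b = b \<otimes> c"
  shows "(a \<otimes> c) \<otimes> b \<otimes> inv (a \<otimes> c) \<otimes> inv b = a \<otimes> b \<otimes> inv a \<otimes> inv b"
proof -
  have "(a \<otimes> c) \<otimes> b \<otimes> inv (a \<otimes> c) \<otimes> inv b = a \<otimes> ((c \<otimes> b) \<otimes> (inv c \<otimes> (inv a \<otimes> inv b)))"
    using assms by (simp add: inv_mult_group m_assoc)
  also have "\<dots> = a \<otimes> b \<otimes> inv a \<otimes> inv b"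
    using assms by (simp add: m_assoc)
  finally show ?thesis .
qed

lemma commutator_mult_right:
  assumes "a \<in> carrier G" "b \<in> carrier G" "d \<in> carrier G" "d \<otimes> a = a \<otimes> d"
  shows "a \<otimes> (b \<otimes> d) \<otimes> inv a \<otimes> inv (b \<otimes> d) = a \<otimes> b \<otimes> inv a \<otimes> inv b"
proof -
  have "d \<otimes> inv a = inv a \<otimes> d"
    using assms inv_commute[of a d] by simp
  have "a \<otimes> (b \<otimes> d) \<otimes> inv a \<otimes> inv (b \<otimes> d) = a \<otimes> b \<otimes> (d \<otimes> inv a) \<otimes> inv d \<otimes> inv b"
    using assms by (simp add: inv_mult_group m_assoc)
  also have "\<dots> = a \<otimes> b \<otimes> inv a \<otimes> inv b"
    using assms \<open>d \<otimes> inv a = inv a \<otimes> d\<close> by (simp add: m_assoc)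
  finally show ?thesis .
qed

lemma normal_disjoint_commute:
  assumes A: "A \<lhd> G" and B: "B \<lhd> G" and AB: "A \<inter> B = {\<one>}"
    and a: "a \<in> A" and b: "b \<in> B"
  shows "a \<otimes> b = b \<otimes> a"
proof -
  have Asub: "subgroup A G" and Bsub: "subgroup B G"
    using normal_imp_subgroup[OF A] normal_imp_subgroup[OF B] .
  have ac: "a \<in> carrier G" and bc: "b \<in> carrier G"
    using subgroup.mem_carrier[OF Asub a] subgroup.mem_carrier[OF Bsub b] .
  have "a \<otimes> b \<otimes> inv a \<in> B"
    using B ac b by (rule normal.inv_op_closed2)
  then have inB: "a \<otimes> b \<otimes> inv a \<otimes> inv b \<in> B"
    using subgroup.m_closed[OF Bsub] subgroup.m_inv_closed[OF Bsub b] by blast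
  have "b \<otimes> inv a \<otimes> inv b \<in> A"
    using A bc subgroup.m_inv_closed[OF Asub a] by (rule normal.inv_op_closed2)
  then have "a \<otimes> (b \<otimes> inv a \<otimes> inv b) \<in> A"
    using subgroup.m_closed[OF Asub a] by blast
  then have "a \<otimes> b \<otimes> inv a \<otimes> inv b \<in> A"
    using ac bc by (simp add: m_assoc)
  with inB AB have "a \<otimes> b \<otimes> inv a \<otimes> inv b = \<one>"
    by blast
  then show ?thesis
    using ac bc commutator_eq_one_iff by blast
qed

lemma derived_set_mult_abelian_subset:
  assumes "H \<subseteq> carrier G" "K \<subseteq> carrier G" "K \<subseteq> centralizer G (H \<union> K)"
  shows "derived_set G (H <#> K) \<subseteq> derived_set G H"
proof
  fix w assume "w \<in> derived_set G (H <#> K)"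
  then obtain h1 k1 h2 k2 where h: "h1 \<in> H" "h2 \<in> H" and k: "k1 \<in> K" "k2 \<in> K"
    and w: "w = (h1 \<otimes> k1) \<otimes> (h2 \<otimes> k2) \<otimes> inv (h1 \<otimes> k1) \<otimes> inv (h2 \<otimes> k2)"
    unfolding set_mult_def by blast
  have c: "h1 \<in> carrier G" "h2 \<in> carrier G" "k1 \<in> carrier G" "k2 \<in> carrier G"
    using h k assms(1,2) by auto
  have "k1 \<otimes> h2 = h2 \<otimes> k1" "k1 \<otimes> k2 = k2 \<otimes> k1" "k2 \<otimes> h1 = h1 \<otimes> k2"
    using h k assms(3) unfolding centralizer_def by auto
  then have "k1 \<otimes> (h2 \<otimes> k2) = (h2 \<otimes> k2) \<otimes> k1"
    using c by (metis m_assoc)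
  then have "w = h1 \<otimes> (h2 \<otimes> k2) \<otimes> inv h1 \<otimes> inv (h2 \<otimes> k2)"
    using w c by (simp add: commutator_mult_left)
  also have "\<dots> = h1 \<otimes> h2 \<otimes> inv h1 \<otimes> inv h2"
    using c(1,2,4) \<open>k2 \<otimes> h1 = h1 \<otimes> k2\<close> by (rule commutator_mult_right)
  finally show "w \<in> derived_set G H"
    using h by blast
qed

lemma subgroup_set_mult_centralizing:
  assumes H: "subgroup H G" and K: "subgroup K G" and HK: "K \<subseteq> centralizer G H"
  shows "subgroup (H <#> K) G"
proof (rule subgroupI)
  show "H <#> K \<subseteq> carrier G"
    using H K by (simp add: setmult_subset_G subgroup.subset)
  show "H <#> K \<noteq> {}"
    using subgroup.one_closed[OF H] subgroup.one_closed[OF K] unfolding set_mult_def by blast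
next
  fix g assume "g \<in> H <#> K"
  then obtain h k where h: "h \<in> H" and k: "k \<in> K" and g: "g = h \<otimes> k"
    unfolding set_mult_def by blast
  have c: "h \<in> carrier G" "k \<in> carrier G"
    using subgroup.mem_carrier[OF H h] subgroup.mem_carrier[OF K k] .
  have "inv k \<otimes> inv h = inv h \<otimes> inv k"
    using subgroup.m_inv_closed[OF K k] subgroup.m_inv_closed[OF H h] HK
    unfolding centralizer_def by blast
  then have "inv g = inv h \<otimes> inv k"
    using c g by (simp add: inv_mult_group)
  then show "inv g \<in> H <#> K"
    using subgroup.m_inv_closed[OF H h] subgroup.m_inv_closed[OF K k]
    unfolding set_mult_def by blast
next
  fix g g' assume "g \<in> H <#> K" "g' \<in> H <#> K"
  then obtain h k h' k' where h: "h \<in> H" "h' \<in> H" and k: "k \<in> K" "k' \<in> K"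
    and g: "g = h \<otimes> k" "g' = h' \<otimes> k'"
    unfolding set_mult_def by blast
  have c: "h \<in> carrier G" "k \<in> carrier G" "h' \<in> carrier G" "k' \<in> carrier G"
    using h k H K subgroup.mem_carrier by metis+
  have "k \<otimes> h' = h' \<otimes> k"
    using h k HK unfolding centralizer_def by blast
  then have "g \<otimes> g' = (h \<otimes> h') \<otimes> (k \<otimes> k')"
    using c g by (simp add: m_assoc[symmetric]) (simp add: m_assoc)
  then show "g \<otimes> g' \<in> H <#> K"
    using subgroup.m_closed[OF H h] subgroup.m_closed[OF K k] unfolding set_mult_def by blast
qed

lemma derived_subset_mult_cyclic:
  assumes "subgroup H G" "c \<in> centralizer G H" "K \<subseteq> H <#> generate G {c}"
  shows "derived G K \<subseteq> H"
proof -
  have H: "H \<subseteq> carrier G"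
    using assms(1) by (rule subgroup.subset)
  have c: "c \<in> carrier G"
    using assms(2) unfolding centralizer_def by blast
  have C: "generate G {c} \<subseteq> carrier G"
    using c by (simp add: generate_incl)
  have "generate G {c} \<subseteq> centralizer G (H \<union> generate G {c})"
    using generate_singleton_subset_centralizer[OF H assms(2)] generate_singleton_abelian[OF c]
    by (simp add: centralizer_Un)
  then have "derived_set G (H <#> generate G {c}) \<subseteq> derived_set G H"
    by (rule derived_set_mult_abelian_subset[OF H C])
  with mono_derived_set[OF assms(3)] have "derived_set G K \<subseteq> derived_set G H"
    by (rule subset_trans)
  also have "\<dots> \<subseteq> H"
    using subset_refl assms(1) by (rule derived_set_incl)
  finally show ?thesis
    unfolding derived_def using assms(1) by (rule generate_subgroup_incl)
qed

lemma derived_generate_subset_mult_cyclic: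
  assumes "subgroup H G" "c \<in> centralizer G H" "S \<subseteq> H <#> generate G {c}"
  shows "derived G (generate G S) \<subseteq> H"
proof -
  have c: "c \<in> carrier G"
    using assms(2) unfolding centralizer_def by blast
  have "generate G {c} \<subseteq> centralizer G H"
    using assms(1,2) subgroup.subset generate_singleton_subset_centralizer by blast
  then have "subgroup (H <#> generate G {c}) G"
    using c by (intro subgroup_set_mult_centralizing[OF assms(1) generate_is_subgroup]) auto
  then show ?thesis
    by (rule derived_subset_mult_cyclic[OF assms(1,2) generate_subgroup_incl[OF assms(3)]])
qed

lemma derived_generate_insert_subset_centralizer:
  assumes "subgroup B G" "z \<in> centralizer G B" "p \<in> B" "S \<subseteq> centralizer G B"
  shows "derived G (generate G (insert (z \<otimes> inv p) S)) \<subseteq> centralizer G B"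
proof -
  have Bc: "B \<subseteq> carrier G"
    using assms(1) by (rule subgroup.subset)
  have "inv p \<in> generate G {p}"
    by (simp add: generate.inv)
  then have "z \<otimes> inv p \<in> centralizer G B <#> generate G {p}"
    using assms(2) unfolding set_mult_def by blast
  moreover have "s \<in> centralizer G B <#> generate G {p}" if "s \<in> S" for s
  proof -
    have "s = s \<otimes> \<one>" and "s \<in> centralizer G B"
      using that assms(4) unfolding centralizer_def by auto
    then show ?thesis
      using generate.one[of G "{p}"] unfolding set_mult_def by blast
  qed
  moreover have "p \<in> centralizer G (centralizer G B)"
    using assms(3) Bc unfolding centralizer_def by auto
  ultimately show ?thesis
    using derived_generate_subset_mult_cyclic[OF subgroup_centralizer[OF Bc]] by blast
qed

lemma internal_direct_product_commute:
  assumes "internal_direct_product G C A B"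
  shows "A \<subseteq> centralizer G B"
proof -
  have C: "subgroup C G" and A: "A \<lhd> G\<lparr>carrier := C\<rparr>" and B: "B \<lhd> G\<lparr>carrier := C\<rparr>"
    and AB: "A \<inter> B = {\<one>}"
    using assms unfolding internal_direct_product_def by blast+
  interpret K: group "G\<lparr>carrier := C\<rparr>"
    using C by (rule subgroup_imp_group)
  have "a \<otimes> b = b \<otimes> a" if "a \<in> A" "b \<in> B" for a b
    using K.normal_disjoint_commute[OF A B _ that] AB by simp
  moreover have "A \<subseteq> carrier G"
    using subgroup.subset[OF incl_subgroup[OF C normal_imp_subgroup[OF A]]] .
  ultimately show ?thesis
    unfolding centralizer_def by blast
qed

lemma derived_internal_direct_product_cyclic:
  assumes "internal_direct_product G C (generate G {z}) B"
  shows "derived G C \<subseteq> B"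
proof -
  have "subgroup C G" and "B \<lhd> G\<lparr>carrier := C\<rparr>"
    using assms unfolding internal_direct_product_def by blast+
  then have B: "subgroup B G"
    using incl_subgroup normal_imp_subgroup by blast
  have "generate G {z} \<subseteq> centralizer G B"
    using assms by (rule internal_direct_product_commute)
  then have "z \<in> centralizer G B" and "C = B <#> generate G {z}"
    using assms set_mult_commute_centralizer generate.incl[of z "{z}" G]
    unfolding internal_direct_product_def by blast+
  with B show ?thesis
    by (intro derived_subset_mult_cyclic) auto
qed

end

theorem mainTheorem10:
  fixes G (structure) and Y :: "'a set" and x y :: "nat \<Rightarrow> 'a" and m n :: nat
  assumes "group G"
    and "Y \<subseteq> carrier G" and "generate G Y = carrier G"
    and "x ` {0..m} \<subseteq> Y" and "y ` {0..n} \<subseteq> Y"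
    and "x 0 = y 0"
    and "\<forall>i\<in>{1..m}. \<forall>j\<in>{1..n}. inv (x i) \<otimes> inv (y j) \<otimes> x i \<otimes> y j = \<one>"
    and "internal_direct_product G (generate G (y ` {0..n}))
           (generate G {list_prod G (map y [0..<Suc n])}) (generate G (y ` {1..n}))"
  shows "(\<forall>i\<in>{1..m}. \<forall>h\<in>derived G (generate G (y ` {0..n})). x i \<otimes> h = h \<otimes> x i)
       \<and> (\<forall>j\<in>{1..n}. \<forall>h\<in>derived G (generate G (x ` {0..m})). y j \<otimes> h = h \<otimes> y j)"
proof -
  interpret group G by fact
  define B where "B = generate G (y ` {1..n})"
  define z where "z = list_prod G (map y [0..<Suc n])"
  define p where "p = list_prod G (map y [1..<Suc n])"
  have xc: "x ` {0..m} \<subseteq> carrier G" and yc: "y ` {0..n} \<subseteq> carrier G"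
    using assms(2,4,5) by auto
  have B: "subgroup B G"
    unfolding B_def using yc by (intro generate_is_subgroup) auto
  have dp: "internal_direct_product G (generate G (y ` {0..n})) (generate G {z}) B"
    using assms(8) unfolding z_def B_def .
  have yB: "y j \<in> B" if "j \<in> {1..n}" for j
    unfolding B_def using that by (auto intro: generate.incl)
  have xB: "x i \<in> centralizer G B" if "i \<in> {1..m}" for i
    unfolding B_def using that xc yc assms(7) by (intro mem_centralizer_generateI) auto
  have pB: "p \<in> B"
    unfolding p_def using B yB by (intro list_prod_closed) auto
  have "z = y 0 \<otimes> p"
    unfolding z_def p_def using upt_conv_Cons[of 0 "Suc n"] by simp
  then have "x 0 = z \<otimes> inv p"
    using assms(6) yc subgroup.mem_carrier[OF B pB] by (simp add: image_subset_iff m_assoc)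
  then have "x ` {0..m} = insert (z \<otimes> inv p) (x ` {1..m})"
    by (auto simp: atLeastAtMost_insertL[symmetric])
  moreover have "z \<in> centralizer G B"
    using internal_direct_product_commute[OF dp] generate.incl[of z "{z}" G] by blast
  moreover have "x ` {1..m} \<subseteq> centralizer G B"
    using xB by blast
  ultimately have derived_x: "derived G (generate G (x ` {0..m})) \<subseteq> centralizer G B"
    using derived_generate_insert_subset_centralizer[OF B _ pB] by simp
  have derived_y: "derived G (generate G (y ` {0..n})) \<subseteq> B"
    using dp by (rule derived_internal_direct_product_cyclic)
  show ?thesis
  proof (intro conjI ballI)
    fix i h assume "i \<in> {1..m}" "h \<in> derived G (generate G (y ` {0..n}))"
    then show "x i \<otimes> h = h \<otimes> x i"
      using xB derived_y unfolding centralizer_def by blast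
  next
    fix j h assume "j \<in> {1..n}" "h \<in> derived G (generate G (x ` {0..m}))"
    then have "h \<otimes> y j = y j \<otimes> h"
      using yB derived_x unfolding centralizer_def by blast
    then show "y j \<otimes> h = h \<otimes> y j" ..
  qed
qed

end
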